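(* For every $k\in\mathbb{N}$, $Q(2,2k;2)=(-1)^k(k!)^2$, that is, \[ \sum_{\ell=0}^{2k}(\ell+1)\,s(2k+1,\ell+1)\,k^{\ell}=(-1)^k(k!)^2. \]
   Context: $s(n,k)$ denotes the signed Stirling numbers of the first kind, defined by $\frac{[\ln(1+x)]^k}{k!}=\sum_{n=k}^\infty s(n,k)\frac{x^n}{n!}$ for $|x|<1$; equivalently $\prod_{j=0}^{n-1}(z-j)=\sum_{k=0}^n s(n,k)z^k$. For $m\in\mathbb{N}$, $k\in\mathbb{N}_0$ and $\alpha\in\mathbb{R}$, $Q(m,k;\alpha)=\sum_{\ell=0}^{k}\binom{m+\ell-1}{m-1}s(m+k-1,m+\ell-1)\left(\frac{m+k-\alpha}{2}\right)^{\ell}$. *)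

theory Defs
  imports Complex_Main
begin

text \<open>Signed Stirling numbers of the first kind s(n,k), characterised by
  prod_{j<n} (z - j) = sum_{k<=n} s(n,k) z^k, i.e. by the recurrence
  s(n+1,k+1) = s(n,k) - n s(n,k+1).\<close>
fun sstirling :: "nat \<Rightarrow> nat \<Rightarrow> int" where
  "sstirling 0 0 = 1"
| "sstirling 0 (Suc k) = 0"
| "sstirling (Suc n) 0 = 0"
| "sstirling (Suc n) (Suc k) = sstirling n k - int n * sstirling n (Suc k)"

definition Q :: "nat \<Rightarrow> nat \<Rightarrow> real \<Rightarrow> real" where
  "Q m k \<alpha> = (\<Sum>l = 0..k. real ((m + l - 1) choose (m - 1))
        * real_of_int (sstirling (m + k - 1) (m + l - 1))
        * ((real (m + k) - \<alpha>) / 2) ^ l)"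

end

theory Submission
  imports Defs "HOL-Computational_Algebra.Polynomial"
begin

text \<open>With \<open>p(z) = z(z-1)...(z-2k)\<close> the sum \<open>Q(2,2k;2) = sum_l (l+1) s(2k+1,l+1) k^l\<close> is
  \<open>p'(k)\<close>. As \<open>k\<close> is a root of \<open>p\<close>, \<open>p'(k)\<close> is the product of the remaining factors
  \<open>k - j\<close> (\<open>j \<noteq> k\<close>), which contribute \<open>k!\<close> from \<open>j < k\<close> and \<open>(-1)^k k!\<close> from \<open>j > k\<close>.\<close>

definition falling_poly :: "nat \<Rightarrow> 'a::comm_ring_1 poly" where
  "falling_poly n = (\<Prod>j<n. [:- of_nat j, 1:])"

lemma coeff_falling_poly: "coeff (falling_poly n) m = of_int (sstirling n m)"
proof (induction n arbitrary: m)
  case 0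
  then show ?case by (cases m) (auto simp: falling_poly_def)
next
  case (Suc n)
  note IH = Suc.IH
  have rec: "falling_poly (Suc n) = pCons 0 (falling_poly n) - smult (of_nat n) (falling_poly n)"
    by (simp add: falling_poly_def algebra_simps)
  show ?case
  proof (cases m)
    case 0
    have "of_nat n * coeff (falling_poly n) 0 = (0 :: 'a)"
      using IH[of 0] by (cases n) simp_all
    then show ?thesis using 0 by (simp add: rec)
  next
    case (Suc l)
    then show ?thesis by (simp add: rec coeff_pCons IH)
  qed
qed

lemma degree_falling_poly: "degree (falling_poly n :: 'a::idom poly) = n"
  unfolding falling_poly_def by (subst degree_prod_eq_sum_degree) auto

lemma Q_two_eq_poly_pderiv_falling_poly:
  "Q 2 m \<alpha> = poly (pderiv (falling_poly (Suc m))) ((real (m + 2) - \<alpha>) / 2)"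
proof -
  have "Q 2 m \<alpha> = (\<Sum>l = 0..m. coeff (pderiv (falling_poly (Suc m))) l * ((real (m + 2) - \<alpha>) / 2) ^ l)"
    unfolding Q_def coeff_pderiv coeff_falling_poly
    by (intro sum.cong) (auto simp: add.commute)
  then show ?thesis
    by (simp add: poly_altdef degree_pderiv degree_falling_poly atLeast0AtMost)
qed

lemma poly_pderiv_prod_linear_at_root:
  fixes c :: "'b \<Rightarrow> 'a::idom"
  assumes "finite A" "a \<in> A"
  shows "poly (pderiv (\<Prod>j\<in>A. [:- c j, 1:])) (c a) = (\<Prod>j\<in>A - {a}. c a - c j)"
proof -
  have "poly (pderiv (\<Prod>j\<in>A. [:- c j, 1:])) (c a) = (\<Sum>b\<in>A. \<Prod>j\<in>A - {b}. c a - c j)"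
    using assms(1) by (simp add: pderiv_prod pderiv_pCons poly_sum poly_prod)
  also have "\<dots> = (\<Prod>j\<in>A - {a}. c a - c j)"
    \<comment> \<open>every other summand contains the vanishing factor \<open>j = a\<close>\<close>
    using assms by (subst sum.remove[of _ a]) (auto intro!: sum.neutral prod_zero)
  finally show ?thesis .
qed

lemma prod_diff_punctured_interval:
  "(\<Prod>j\<in>{..m + n} - {m}. (of_nat m - of_nat j :: 'a::{comm_ring_1,ring_char_0})) = (-1) ^ n * fact m * fact n"
proof -
  have split: "{..m + n} - {m} = {..<m} \<union> {Suc m..m + n}" by auto
  have below: "(\<Prod>j<m. (of_nat m - of_nat j :: 'a)) = fact m"
    by (simp add: fact_prod_rev atLeast0LessThan of_nat_diff)
  have "(\<Prod>j\<in>{Suc m..m + n}. (of_nat m - of_nat j :: 'a)) = (\<Prod>i\<in>{1..n}. - of_nat i)"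
    using prod.shift_bounds_cl_nat_ivl[of "\<lambda>j. of_nat m - of_nat j :: 'a" 1 m n]
    by (simp add: add.commute)
  also have "\<dots> = (-1) ^ n * fact n"
    by (simp add: prod_uminus fact_prod)
  finally have above: "(\<Prod>j\<in>{Suc m..m + n}. (of_nat m - of_nat j :: 'a)) = (-1) ^ n * fact n" .
  show ?thesis
    unfolding split by (subst prod.union_disjoint) (auto simp: below above mult_ac)
qed

theorem mainTheorem11:
  fixes k :: nat
  assumes "k \<ge> 1"
  shows "Q 2 (2 * k) 2 = (-1) ^ k * (fact k) ^ 2"
proof -
  have "Q 2 (2 * k) 2 = poly (pderiv (falling_poly (Suc (2 * k)))) (of_nat k)"
    by (simp add: Q_two_eq_poly_pderiv_falling_poly)
  also have "\<dots> = (\<Prod>j\<in>{..<Suc (2 * k)} - {k}. of_nat k - of_nat j)"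
    unfolding falling_poly_def by (rule poly_pderiv_prod_linear_at_root) auto
  also have "\<dots> = (-1) ^ k * fact k * fact k"
    using prod_diff_punctured_interval[of k k] by (simp add: lessThan_Suc_atMost mult_2)
  finally show ?thesis by (simp add: power2_eq_square)
qed

end
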